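(* Let $n\ge 3$ and $v\in A_n$. Then $$\mathrm{cyc}(v)=\begin{cases} n-\ell_{T(A_n)}(v) & \text{if } \ell_{T(A_n)}(v) \text{ is even},\\ n-\ell_{T(A_n)}(v)-1 & \text{if } \ell_{T(A_n)}(v)\text{ is odd}.\end{cases}$$
   Context: $A_n$ is the alternating group on $\{1,\dots,n\}$, $T(A_n)=\{(1\,2)(i\,j)\mid 1\le i<j\le n\}$, and $\ell_{T(A_n)}(v)=\min\{k\ge 0\mid v=t_1\cdots t_k,\ t_i\in T(A_n)\}$. $\mathrm{cyc}(v)$ is the number of cycles of $v$ in its disjoint cycle decomposition, fixed points counted. *)

theory Defs
  imports "HOL-Combinatorics.Combinatorics"
begin

definition alt_group :: "nat \<Rightarrow> (nat \<Rightarrow> nat) set" where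
  "alt_group n = {p. p permutes {1..n} \<and> evenperm p}"

definition T_alt :: "nat \<Rightarrow> (nat \<Rightarrow> nat) set" where
  "T_alt n = {transpose 1 2 \<circ> transpose i j | i j. 1 \<le> i \<and> i < j \<and> j \<le> n}"

definition list_prod :: "(nat \<Rightarrow> nat) list \<Rightarrow> nat \<Rightarrow> nat" where
  "list_prod ts = foldr (\<circ>) ts id"

definition len_T :: "nat \<Rightarrow> (nat \<Rightarrow> nat) \<Rightarrow> nat" where
  "len_T n v = (LEAST k. \<exists>ts. length ts = k \<and> set ts \<subseteq> T_alt n \<and> v = list_prod ts)"

definition cyc :: "nat \<Rightarrow> (nat \<Rightarrow> nat) \<Rightarrow> nat" where
  "cyc n v = card ((\<lambda>x. orbit v x) ` {1..n})"

end

theory Submission imports Defs begin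

text \<open>Multiplying a permutation by a transposition changes its number of orbits by at most one,
  and increases it when both points lie in the same orbit. Hence a permutation with \<open>c\<close> orbits on
  an \<open>n\<close>-set is a product of \<open>n - c\<close> transpositions and of no fewer. Since
  \<open>(1 2)(i j) \<cdot> (1 2)(k l) = (i' j')(k l)\<close> with \<open>(i' j')\<close> the conjugate of \<open>(i j)\<close> by \<open>(1 2)\<close>,
  even-length words in transpositions and words in \<open>T(A\<^sub>n)\<close> of the same length have the same
  products, while a single generator is a product of two transpositions. So for even \<open>v\<close>, with
  \<open>d = n - cyc v\<close> even, the generator length \<open>\<ell>\<close> satisfies \<open>\<ell> \<le> d \<le> \<ell> + (\<ell> mod 2)\<close>.\<close>

definition num_orbits :: "'a set \<Rightarrow> ('a \<Rightarrow> 'a) \<Rightarrow> nat" where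
  "num_orbits S f = card ((\<lambda>x. orbit f x) ` S)"

definition transpositions :: "'a set \<Rightarrow> ('a \<Rightarrow> 'a) set" where
  "transpositions S = {transpose a b | a b. a \<in> S \<and> b \<in> S \<and> a \<noteq> b}"

lemma orbit_eq_if_mem_orbit:
  assumes "permutation f" "y \<in> orbit f x" shows "orbit f y = orbit f x"
  using assms by (metis cyclic_on_orbit' orbit_cyclic_eq3)

lemma orbit_comp_transpose_eq:
  assumes "permutation f" "a \<notin> orbit f x" "b \<notin> orbit f x"
  shows "orbit (f \<circ> transpose a b) x = orbit f x"
  by (rule orbit_cong) (use permutation_self_in_orbit[OF assms(1)] assms in \<open>auto simp: transpose_def\<close>)

lemma num_orbits_le_comp_transpose:
  assumes f: "f permutes S" and fin: "finite S" and a: "a \<in> S" and b: "b \<in> S"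
  shows "num_orbits S f \<le> num_orbits S (f \<circ> transpose a b) + 1"
proof -
  define g where "g = f \<circ> transpose a b"
  have pf: "permutation f" and pg: "permutation g"
    using f fin a b by (auto simp: g_def permutation_permutes intro: permutes_compose permutes_swap_id)
  define A where "A = {X \<in> (\<lambda>x. orbit f x) ` S. a \<notin> X \<and> b \<notin> X}"
  have finA: "finite A" unfolding A_def using fin by simp
  have "(\<lambda>x. orbit f x) ` S \<subseteq> A \<union> {orbit f a, orbit f b}"
    using orbit_eq_if_mem_orbit[OF pf, of a] orbit_eq_if_mem_orbit[OF pf, of b] by (auto simp: A_def)
  hence "num_orbits S f \<le> card (A \<union> {orbit f a, orbit f b})"
    unfolding num_orbits_def using finA by (intro card_mono) auto
  also have "\<dots> \<le> card A + card {orbit f a, orbit f b}" by (rule card_Un_le)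
  also have "\<dots> \<le> card A + 2" by (simp add: card_insert_le_m1)
  finally have before: "num_orbits S f \<le> card A + 2" .
  have "A \<subseteq> (\<lambda>x. orbit g x) ` S"
  proof
    fix X assume "X \<in> A"
    then obtain x where "x \<in> S" "X = orbit f x" "a \<notin> X" "b \<notin> X" by (auto simp: A_def)
    moreover have "orbit g x = orbit f x"
      unfolding g_def using orbit_comp_transpose_eq[OF pf] calculation by simp
    ultimately show "X \<in> (\<lambda>x. orbit g x) ` S" by auto
  qed
  moreover have "orbit g a \<in> (\<lambda>x. orbit g x) ` S" using a by simp
  ultimately have after: "insert (orbit g a) A \<subseteq> (\<lambda>x. orbit g x) ` S" by simp
  have "orbit g a \<notin> A" using permutation_self_in_orbit[OF pg, of a] by (auto simp: A_def)
  then have "card A + 1 = card (insert (orbit g a) A)" using finA by simp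
  also have "\<dots> \<le> num_orbits S g"
    unfolding num_orbits_def using fin after by (intro card_mono) auto
  finally show ?thesis using before by (simp add: g_def)
qed

text \<open>Composing with \<open>(a, v a)\<close> cuts the fixed point \<open>v a\<close> out of the cycle of \<open>a\<close>.\<close>

lemma num_orbits_comp_transpose_splits:
  assumes v: "v permutes S" and fin: "finite S" and a: "a \<in> S" and va: "v a \<noteq> a"
  shows "num_orbits S v + 1 \<le> num_orbits S (v \<circ> transpose a (v a))"
proof -
  define b where "b = v a"
  define p where "p = v \<circ> transpose a b"
  have b: "b \<in> S" unfolding b_def using v a by (simp add: permutes_in_image)
  have pv: "permutation v" and pp: "permutation p"
    using v fin a b by (auto simp: p_def permutation_permutes intro: permutes_compose permutes_swap_id)
  define A where "A = {X \<in> (\<lambda>x. orbit v x) ` S. a \<notin> X}"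
  have finA: "finite A" unfolding A_def using fin by simp
  have same_orbit: "orbit v b = orbit v a"
    unfolding b_def by (rule orbit_eq_if_mem_orbit[OF pv orbit.base])
  have b_notin_A: "b \<notin> X" if "X \<in> A" for X
    using that same_orbit orbit_eq_if_mem_orbit[OF pv, of b] permutation_self_in_orbit[OF pv, of a]
    by (auto simp: A_def)
  have "(\<lambda>x. orbit v x) ` S \<subseteq> insert (orbit v a) A"
    using orbit_eq_if_mem_orbit[OF pv, of a] by (auto simp: A_def)
  hence "num_orbits S v \<le> card (insert (orbit v a) A)"
    unfolding num_orbits_def using finA by (intro card_mono) auto
  also have "\<dots> \<le> card A + 1" using finA by (simp add: card_insert_if)
  finally have before: "num_orbits S v \<le> card A + 1" .
  have orbit_b: "orbit p b = {b}"
    by (simp add: orbit_eq_singleton_iff p_def b_def)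
  have "A \<subseteq> (\<lambda>x. orbit p x) ` S"
  proof
    fix X assume X: "X \<in> A"
    then obtain x where "x \<in> S" "X = orbit v x" "a \<notin> X" by (auto simp: A_def)
    moreover have "orbit p x = orbit v x"
      unfolding p_def using orbit_comp_transpose_eq[OF pv] b_notin_A[OF X] calculation by simp
    ultimately show "X \<in> (\<lambda>x. orbit p x) ` S" by auto
  qed
  moreover have "{b} \<in> (\<lambda>x. orbit p x) ` S" "orbit p a \<in> (\<lambda>x. orbit p x) ` S"
    using a b by (auto simp flip: orbit_b)
  ultimately have after: "insert {b} (insert (orbit p a) A) \<subseteq> (\<lambda>x. orbit p x) ` S" by simp
  have "orbit p a \<notin> A" using permutation_self_in_orbit[OF pp, of a] by (auto simp: A_def)
  moreover have "{b} \<noteq> orbit p a"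
    using va permutation_self_in_orbit[OF pp, of a] by (metis singletonD b_def)
  moreover have "{b} \<notin> A" using b_notin_A[of "{b}"] by blast
  ultimately have "card A + 2 = card (insert {b} (insert (orbit p a) A))" using finA by simp
  also have "\<dots> \<le> num_orbits S p"
    unfolding num_orbits_def using fin after by (intro card_mono) auto
  finally show ?thesis using before by (simp add: p_def b_def)
qed

lemma num_orbits_id: "finite S \<Longrightarrow> num_orbits S id = card S"
  unfolding num_orbits_def
  by (subst card_image) (auto simp: inj_on_def orbit_eq_singleton_iff[THEN iffD2])

lemma num_orbits_le_card: "finite S \<Longrightarrow> num_orbits S f \<le> card S"
  unfolding num_orbits_def by (rule card_image_le)

lemma list_prod_Nil [simp]: "list_prod [] = id"
  by (simp add: list_prod_def)

lemma list_prod_Cons [simp]: "list_prod (t # ts) = t \<circ> list_prod ts"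
  by (simp add: list_prod_def)

lemma list_prod_append: "list_prod (xs @ ys) = list_prod xs \<circ> list_prod ys"
  by (induction xs) auto

lemma transpose_in_transpositions:
  "a \<in> S \<Longrightarrow> b \<in> S \<Longrightarrow> a \<noteq> b \<Longrightarrow> transpose a b \<in> transpositions S"
  unfolding transpositions_def by blast

lemma list_prod_transpositions_permutes:
  "set L \<subseteq> transpositions S \<Longrightarrow> list_prod L permutes S"
  by (induction L) (auto simp: transpositions_def intro: permutes_compose permutes_swap_id)

lemma permutation_list_prod_transpositions:
  "set L \<subseteq> transpositions S \<Longrightarrow> permutation (list_prod L)"
proof (induction L)
  case (Cons t L)
  then have "permutation t" by (auto simp: transpositions_def permutation_swap_id)
  with Cons show ?case unfolding list_prod_Cons by (intro permutation_compose) auto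
qed simp

lemma evenperm_list_prod_transpositions:
  "set L \<subseteq> transpositions S \<Longrightarrow> evenperm (list_prod L) \<longleftrightarrow> even (length L)"
proof (induction L)
  case (Cons t L)
  then obtain a b where t: "t = transpose a b" "a \<noteq> b" by (auto simp: transpositions_def)
  have "permutation (list_prod L)" using Cons by (intro permutation_list_prod_transpositions) auto
  then have "evenperm (t \<circ> list_prod L) \<longleftrightarrow> evenperm t = evenperm (list_prod L)"
    unfolding t(1) by (rule evenperm_comp[OF permutation_swap_id])
  with Cons t show ?case by (simp add: evenperm_swap comp_def)
qed simp

lemma card_le_num_orbits_plus_length:
  assumes "finite S" "set L \<subseteq> transpositions S"
  shows "card S \<le> num_orbits S (list_prod L) + length L"
  using assms(2)
proof (induction L rule: rev_induct)
  case Nil show ?case using num_orbits_id[OF assms(1)] by (simp add: id_def)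
next
  case (snoc t L)
  then obtain a b where t: "t = transpose a b" "a \<in> S" "b \<in> S" by (auto simp: transpositions_def)
  have "list_prod L permutes S" using snoc by (auto intro: list_prod_transpositions_permutes)
  then have "num_orbits S (list_prod L) \<le> num_orbits S (list_prod (L @ [t])) + 1"
    using num_orbits_le_comp_transpose[OF _ assms(1) t(2,3)] t(1) by (simp add: list_prod_append)
  with snoc show ?case by simp
qed

lemma transposition_word_exists:
  assumes "finite S" "v permutes S"
  shows "\<exists>L. set L \<subseteq> transpositions S \<and> length L = card S - num_orbits S v \<and> list_prod L = v"
  using assms(2)
proof (induction "card S - num_orbits S v" arbitrary: v rule: less_induct)
  case less
  show ?case
  proof (cases "v = id")
    case True then show ?thesis using num_orbits_id[OF assms(1)] by (intro exI[of _ "[]"]) simp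
  next
    case False
    then obtain a where va: "v a \<noteq> a" by (auto simp: fun_eq_iff)
    hence a: "a \<in> S" using less.prems by (meson permutes_not_in)
    define b where "b = v a"
    have b: "b \<in> S" unfolding b_def using permutes_in_image[OF less.prems] a by blast
    define p where "p = v \<circ> transpose a b"
    have p: "p permutes S"
      unfolding p_def using less.prems a b by (simp add: permutes_compose permutes_swap_id)
    have vp: "v = p \<circ> transpose a b" unfolding p_def by (simp add: comp_assoc)
    have more: "num_orbits S v + 1 \<le> num_orbits S p"
      unfolding p_def b_def using num_orbits_comp_transpose_splits[OF less.prems assms(1) a va] .
    have fewer: "num_orbits S p \<le> num_orbits S v + 1"
      using num_orbits_le_comp_transpose[OF p assms(1) a b] vp by simp
    have "num_orbits S p \<le> card S" using num_orbits_le_card[OF assms(1)] .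
    then obtain L where L: "set L \<subseteq> transpositions S" "length L = card S - num_orbits S p"
        "list_prod L = p"
      using less.hyps[OF _ p] more by force
    have "transpose a b \<in> transpositions S" using a b va b_def by (intro transpose_in_transpositions) auto
    then show ?thesis using L more fewer \<open>num_orbits S p \<le> card S\<close> vp
      by (intro exI[of _ "L @ [transpose a b]"]) (auto simp: list_prod_append)
  qed
qed

lemma transpose_conj_transpose:
  "transpose a b \<circ> transpose i j \<circ> transpose a b = transpose (transpose a b i) (transpose a b j)"
  by (auto simp: fun_eq_iff transpose_def)

lemma transpositions_conj:
  assumes "s \<in> transpositions S" "a \<in> S" "b \<in> S"
  shows "transpose a b \<circ> s \<circ> transpose a b \<in> transpositions S"
proof -
  obtain i j where s: "s = transpose i j" "i \<in> S" "j \<in> S" "i \<noteq> j"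
    using assms(1) by (auto simp: transpositions_def)
  have "transpose a b i \<in> S" "transpose a b j \<in> S"
    using s permutes_in_image[OF permutes_swap_id[OF assms(2,3)]] by auto
  moreover have "transpose a b i \<noteq> transpose a b j" using s(4) by (auto dest: transpose_eq_imp_eq)
  ultimately show ?thesis
    unfolding s(1) transpose_conj_transpose by (rule transpose_in_transpositions)
qed

lemma transpositions_atLeastAtMost:
  "transpositions {1..n::nat} = {transpose i j | i j. 1 \<le> i \<and> i < j \<and> j \<le> n}"
proof (intro equalityI subsetI)
  fix t assume "t \<in> transpositions {1..n}"
  then obtain a b where t: "t = transpose a b" "a \<in> {1..n}" "b \<in> {1..n}" "a \<noteq> b"
    by (auto simp: transpositions_def)
  show "t \<in> {transpose i j | i j. 1 \<le> i \<and> i < j \<and> j \<le> n}"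
  proof (cases "a < b")
    case True with t show ?thesis by auto
  next
    case False
    then have "b < a" using t(4) by simp
    moreover have "t = transpose b a" using t(1) by (simp add: transpose_commute)
    ultimately show ?thesis using t(2,3) by auto
  qed
next
  fix t assume "t \<in> {transpose i j | i j. 1 \<le> i \<and> i < j \<and> j \<le> n}"
  then show "t \<in> transpositions {1..n}" by (auto intro: transpose_in_transpositions)
qed

lemma T_alt_eq: "T_alt n = (\<lambda>t. transpose 1 2 \<circ> t) ` transpositions {1..n}"
proof (intro equalityI subsetI)
  fix x assume "x \<in> T_alt n"
  then obtain i j where "x = transpose 1 2 \<circ> transpose i j" "1 \<le> i" "i < j" "j \<le> n"
    by (auto simp: T_alt_def)
  then show "x \<in> (\<lambda>t. transpose 1 2 \<circ> t) ` transpositions {1..n}"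
    by (intro image_eqI[of _ _ "transpose i j"] transpose_in_transpositions) auto
next
  fix x assume "x \<in> (\<lambda>t. transpose 1 2 \<circ> t) ` transpositions {1..n}"
  then obtain i j where "x = transpose 1 2 \<circ> transpose i j" "1 \<le> i" "i < j" "j \<le> n"
    unfolding transpositions_atLeastAtMost by auto
  then show "x \<in> T_alt n" unfolding T_alt_def by auto
qed

lemma T_alt_word_of_transposition_word:
  assumes "n \<ge> 2" "set L \<subseteq> transpositions {1..n}" "even (length L)"
  shows "\<exists>ts. length ts = length L \<and> set ts \<subseteq> T_alt n \<and> list_prod ts = list_prod L"
  using assms(2,3)
proof (induction L rule: induct_list012)
  case (3 s t L)
  then obtain ts where ts: "length ts = length L" "set ts \<subseteq> T_alt n" "list_prod ts = list_prod L"
    by auto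
  define \<tau> where "\<tau> = transpose (1::nat) 2"
  define s' where "s' = \<tau> \<circ> s \<circ> \<tau>"
  have "s' \<in> transpositions {1..n}"
    unfolding s'_def \<tau>_def using 3 assms(1) by (intro transpositions_conj) auto
  hence gens: "\<tau> \<circ> s' \<in> T_alt n" "\<tau> \<circ> t \<in> T_alt n" using 3 by (auto simp: T_alt_eq \<tau>_def)
  have "list_prod ((\<tau> \<circ> s') # (\<tau> \<circ> t) # ts) = list_prod (s # t # L)"
    by (simp add: s'_def \<tau>_def ts(3) fun_eq_iff)
  then show ?case using ts gens by (intro exI[of _ "(\<tau> \<circ> s') # (\<tau> \<circ> t) # ts"]) simp
qed auto

lemma transposition_word_of_T_alt_word:
  assumes "n \<ge> 2" "set ts \<subseteq> T_alt n"
  shows "\<exists>L. set L \<subseteq> transpositions {1..n} \<and> length L = length ts + length ts mod 2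
             \<and> list_prod L = list_prod ts"
  using assms(2)
proof (induction ts rule: induct_list012)
  have \<tau>: "transpose 1 2 \<in> transpositions {1..n}"
    using assms(1) by (intro transpose_in_transpositions) auto
  {
    case (2 x)
    then obtain s where "x = transpose 1 2 \<circ> s" "s \<in> transpositions {1..n}" by (auto simp: T_alt_eq)
    then show ?case using \<tau> by (intro exI[of _ "[transpose 1 2, s]"]) simp
  next
    case (3 x y zs)
    then obtain L where L: "set L \<subseteq> transpositions {1..n}"
        "length L = length zs + length zs mod 2" "list_prod L = list_prod zs"
      by auto
    from 3 obtain s t where st: "x = transpose 1 2 \<circ> s" "y = transpose 1 2 \<circ> t"
        "s \<in> transpositions {1..n}" "t \<in> transpositions {1..n}"
      by (auto simp: T_alt_eq)
    define s' where "s' = transpose 1 2 \<circ> s \<circ> transpose (1::nat) 2"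
    have "s' \<in> transpositions {1..n}"
      unfolding s'_def using st(3) assms(1) by (intro transpositions_conj) auto
    moreover have "list_prod (s' # t # L) = list_prod (x # y # zs)"
      by (simp add: st s'_def L(3) fun_eq_iff)
    ultimately show ?case using L st by (intro exI[of _ "s' # t # L"]) simp
  }
qed simp

lemma len_T_le:
  "length ts = k \<Longrightarrow> set ts \<subseteq> T_alt n \<Longrightarrow> v = list_prod ts \<Longrightarrow> len_T n v \<le> k"
  unfolding len_T_def by (rule Least_le) blast

lemma len_T_attained:
  assumes "\<exists>ts. set ts \<subseteq> T_alt n \<and> v = list_prod ts"
  shows "\<exists>ts. length ts = len_T n v \<and> set ts \<subseteq> T_alt n \<and> v = list_prod ts"
  unfolding len_T_def by (rule LeastI_ex) (use assms in blast)

lemma cycle_count_arith: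
  fixes c l n :: nat
  assumes "l \<le> n - c" "n \<le> c + l + l mod 2" "even (n - c)" "c \<le> n"
  shows "c = (if even l then n - l else n - l - 1)"
proof -
  obtain r where r: "n - c = 2 * r" using assms(3) by (metis evenE)
  show ?thesis
  proof (cases "even l")
    case True then obtain k where "l = 2 * k" by auto
    thus ?thesis using assms r True by auto
  next
    case False then obtain k where "l = 2 * k + 1" using oddE by blast
    thus ?thesis using assms r False by (simp; presburger)
  qed
qed

theorem theorem6p3:
  fixes n :: nat and v :: "nat \<Rightarrow> nat"
  assumes "n \<ge> 3" and "v \<in> alt_group n"
  shows "cyc n v = (if even (len_T n v) then n - len_T n v else n - len_T n v - 1)"
proof -
  have n2: "n \<ge> 2" using assms(1) by simp
  have v: "v permutes {1..n}" "evenperm v" using assms(2) by (auto simp: alt_group_def)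
  define c where "c = num_orbits {1..n} v"
  have cyc_eq: "cyc n v = c" by (simp add: cyc_def c_def num_orbits_def)
  have c_le: "c \<le> n" using num_orbits_le_card[of "{1..n}" v] by (simp add: c_def)
  obtain L where L: "set L \<subseteq> transpositions {1..n}" "length L = n - c" "list_prod L = v"
    using transposition_word_exists[OF _ v(1)] by (auto simp: c_def)
  have even_d: "even (n - c)"
    using evenperm_list_prod_transpositions[OF L(1)] L(2,3) v(2) by simp
  obtain ts where ts: "length ts = n - c" "set ts \<subseteq> T_alt n" "list_prod ts = v"
    using T_alt_word_of_transposition_word[OF n2 L(1)] L(2,3) even_d by auto
  have upper: "len_T n v \<le> n - c" using len_T_le[OF ts(1,2) ts(3)[symmetric]] .
  obtain ts' where ts': "length ts' = len_T n v" "set ts' \<subseteq> T_alt n" "v = list_prod ts'"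
    using len_T_attained[of n v] ts by metis
  obtain L' where "set L' \<subseteq> transpositions {1..n}"
      "length L' = len_T n v + len_T n v mod 2" "list_prod L' = v"
    using transposition_word_of_T_alt_word[OF n2 ts'(2)] ts' by auto
  hence lower: "n \<le> c + len_T n v + len_T n v mod 2"
    using card_le_num_orbits_plus_length[of "{1..n}" L'] by (simp add: c_def)
  show ?thesis using cycle_count_arith[OF upper lower even_d c_le] cyc_eq by simp
qed

end
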